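(* Let $s$ be a Nash equilibrium in an $n$-resource selection game $G=\bigl((f_j)_{j=1}^n;(\mu^{R})_{\emptyset\ne R\subseteq[n]}\bigr)$, and let $P^s=\arg\max_{j\in[n]}h^s_j$ (the set of all maximizers). Then: (a) $P^s=P_G$; (b) $h^s_j=h_G$ for every $j\in P^s$; (c) $s_j(R)=0$ for every nonempty $R\subseteq[n]$ with $R\not\subseteq P^s$ and every $j\in P^s$; (d) if $P^s\ne[n]$, the map $s'$ defined for nonempty $R'\subseteq[n]\setminus P^s$ and $j\in[n]\setminus P^s$ by $s'_j(R')=\sum_{R:\,R\setminus P^s=R'}s_j(R)$ is a Nash equilibrium of the game $G-P^s$, and $h^{s'}_j=h^s_j$ for every $j\in[n]\setminus P^s$.
   Context: An $n$-resource selection game is $G=\bigl((f_j)_{j=1}^n;(\mu^{R})_{\emptyset\ne R\subseteq[n]}\bigr)$ with each $f_j:[0,\infty)\to\mathbb{R}$ nondecreasing and each $\mu^R\ge0$. A consumption profile assigns to each nonempty $R$ a vector $s(R)\in[0,\infty)^{[n]}$ with $s_j(R)=0$ for $j\notin R$ and $\sum_j s_j(R)=\mu^R$; loads $\mu^s_j=\sum_R s_j(R)$, costs $h^s_j=f_j(\mu^s_j)$; $s$ is a Nash equilibrium if for every $R$, every $k$ with $s_k(R)>0$ and every $j\in R$, $h^s_k\le h^s_j$. Equalization: for nondecreasing $g_1,\ldots,g_m:[0,\infty)\to\mathbb{R}\cup\{\mathrm{undefined}\}$, $\mathrm{eq}(g_1,\ldots,g_m)(\mu)=g_1(\mu_1)$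 if there exist $\mu_1,\ldots,\mu_m\ge0$ summing to $\mu$ with $g_1(\mu_1)=\cdots=g_m(\mu_m)\in\mathbb{R}$, else $\mathrm{undefined}$. For nonempty $S\subseteq[n]$: $E_G(S)=\mathrm{eq}(f_k:k\in S)\bigl(\sum_{\emptyset\ne R\subseteq S}\mu^R\bigr)$; $M_G(S)$ is the set of nonempty $S'\subseteq S$ such that for every $0\le\mu\le\sum_{R\subseteq S,\,R\cap S'\ne\emptyset}\mu^R$, $\mathrm{eq}(f_k:k\in S')(\mu)\ne E_G(S)$ ($\mathrm{undefined}$ differs from every real); $D_G=\{S: E_G(S)\in\mathbb{R},\ M_G(S)=\emptyset\}$; $h_G=\max_{S\in D_G}E_G(S)$; $P_G=\bigcup\{S\in D_G:E_G(S)=h_G\}$. Resource removal: for $S\subsetneq[n]$, $G-S$ is the $|[n]\setminus S|$-resource selection game with resources $[n]\setminus S$, cost functions $(f_j)_{j\notin S}$, and mass $\sum_{R:\,R\setminus S=R'}\mu^R$ for each nonempty $R'\subseteq[n]\setminus S$. *)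

theory Defs
  imports Complex_Main
begin

text \<open>A resource selection game on a finite resource set N (the paper's [n], or [n] minus
  removed resources): cost functions f j (j in N), masses mu R for nonempty R subseteq N.\<close>

definition nonempty_subsets :: "nat set \<Rightarrow> nat set set" where
  "nonempty_subsets N = {R. R \<subseteq> N \<and> R \<noteq> {}}"

definition is_game :: "nat set \<Rightarrow> (nat \<Rightarrow> real \<Rightarrow> real) \<Rightarrow> (nat set \<Rightarrow> real) \<Rightarrow> bool" where
  "is_game N f mu \<longleftrightarrow> finite N \<and> (\<forall>j\<in>N. mono_on {0..} (f j))
      \<and> (\<forall>R\<in>nonempty_subsets N. mu R \<ge> 0)"

text \<open>Consumption profile: s R j is the consumption of population R on resource j.\<close>
definition is_profile :: "nat set \<Rightarrow> (nat set \<Rightarrow> real) \<Rightarrow> (nat set \<Rightarrow> nat \<Rightarrow> real) \<Rightarrow> bool" where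
  "is_profile N mu s \<longleftrightarrow> (\<forall>R\<in>nonempty_subsets N.
      (\<forall>j\<in>N. s R j \<ge> 0) \<and> (\<forall>j\<in>N - R. s R j = 0) \<and> (\<Sum>j\<in>N. s R j) = mu R)"

definition load :: "nat set \<Rightarrow> (nat set \<Rightarrow> nat \<Rightarrow> real) \<Rightarrow> nat \<Rightarrow> real" where
  "load N s j = (\<Sum>R\<in>nonempty_subsets N. s R j)"

definition cost :: "nat set \<Rightarrow> (nat \<Rightarrow> real \<Rightarrow> real) \<Rightarrow> (nat set \<Rightarrow> nat \<Rightarrow> real) \<Rightarrow> nat \<Rightarrow> real" where
  "cost N f s j = f j (load N s j)"

definition is_nash :: "nat set \<Rightarrow> (nat \<Rightarrow> real \<Rightarrow> real) \<Rightarrow> (nat set \<Rightarrow> real) \<Rightarrow> (nat set \<Rightarrow> nat \<Rightarrow> real) \<Rightarrow> bool" where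
  "is_nash N f mu s \<longleftrightarrow> is_profile N mu s \<and>
     (\<forall>R\<in>nonempty_subsets N. \<forall>k\<in>N. \<forall>j\<in>R. s R k > 0 \<longrightarrow> cost N f s k \<le> cost N f s j)"

text \<open>Equalization of (f k : k in S) at total mass m; None encodes "undefined".\<close>
definition equalizes :: "nat set \<Rightarrow> (nat \<Rightarrow> real \<Rightarrow> real) \<Rightarrow> real \<Rightarrow> real \<Rightarrow> bool" where
  "equalizes S f m c \<longleftrightarrow> (\<exists>x::nat \<Rightarrow> real. (\<forall>k\<in>S. x k \<ge> 0) \<and> (\<Sum>k\<in>S. x k) = m
      \<and> (\<forall>k\<in>S. f k (x k) = c))"

definition eqz :: "nat set \<Rightarrow> (nat \<Rightarrow> real \<Rightarrow> real) \<Rightarrow> real \<Rightarrow> real option" where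
  "eqz S f m = (if \<exists>c. equalizes S f m c then Some (SOME c. equalizes S f m c) else None)"

definition E_G :: "(nat \<Rightarrow> real \<Rightarrow> real) \<Rightarrow> (nat set \<Rightarrow> real) \<Rightarrow> nat set \<Rightarrow> real option" where
  "E_G f mu S = eqz S f (\<Sum>R\<in>nonempty_subsets S. mu R)"

definition M_G :: "(nat \<Rightarrow> real \<Rightarrow> real) \<Rightarrow> (nat set \<Rightarrow> real) \<Rightarrow> nat set \<Rightarrow> nat set set" where
  "M_G f mu S = {S'\<in>nonempty_subsets S. \<forall>m. 0 \<le> m \<and>
      m \<le> (\<Sum>R\<in>{R. R \<subseteq> S \<and> R \<inter> S' \<noteq> {}}. mu R) \<longrightarrow> eqz S' f m \<noteq> E_G f mu S}"

definition D_G :: "nat set \<Rightarrow> (nat \<Rightarrow> real \<Rightarrow> real) \<Rightarrow> (nat set \<Rightarrow> real) \<Rightarrow> nat set set" where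
  "D_G N f mu = {S\<in>nonempty_subsets N. E_G f mu S \<noteq> None \<and> M_G f mu S = {}}"

definition h_G :: "nat set \<Rightarrow> (nat \<Rightarrow> real \<Rightarrow> real) \<Rightarrow> (nat set \<Rightarrow> real) \<Rightarrow> real" where
  "h_G N f mu = Max ((\<lambda>S. the (E_G f mu S)) ` D_G N f mu)"

definition P_G :: "nat set \<Rightarrow> (nat \<Rightarrow> real \<Rightarrow> real) \<Rightarrow> (nat set \<Rightarrow> real) \<Rightarrow> nat set" where
  "P_G N f mu = \<Union>{S\<in>D_G N f mu. the (E_G f mu S) = h_G N f mu}"

text \<open>Resource removal G - S: masses of the reduced game on resources N - S.\<close>
definition remove_mu :: "nat set \<Rightarrow> (nat set \<Rightarrow> real) \<Rightarrow> nat set \<Rightarrow> nat set \<Rightarrow> real" where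
  "remove_mu N mu S R' = (\<Sum>R\<in>{R\<in>nonempty_subsets N. R - S = R'}. mu R)"

definition argmax_cost :: "nat set \<Rightarrow> (nat \<Rightarrow> real \<Rightarrow> real) \<Rightarrow> (nat set \<Rightarrow> nat \<Rightarrow> real) \<Rightarrow> nat set" where
  "argmax_cost N f s = {j\<in>N. \<forall>i\<in>N. cost N f s i \<le> cost N f s j}"

end

theory Submission
  imports Defs
begin

text \<open>A population not contained
  in \<open>P\<^sup>s\<close> has a cheaper resource available, so by the Nash condition it consumes nothing on
  \<open>P\<^sup>s\<close>; this is (c). Hence the loads on \<open>P\<^sup>s\<close> carry exactly the mass of the populations inside
  \<open>P\<^sup>s\<close> and equalize the costs there at \<open>h\<^sup>s\<close>, and their restrictions witness that \<open>M_G(P\<^sup>s)\<close> is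
  empty: \<open>P\<^sup>s \<in> D_G\<close> with \<open>E_G(P\<^sup>s) = h\<^sup>s\<close>. The converse rests on one comparison: loads at which
  every cost is strictly below an equalizing level \<open>c\<close> carry strictly less than the mass equalized
  at \<open>c\<close>. For \<open>S \<in> D_G\<close> with \<open>E_G(S) > h\<^sup>s\<close> this contradicts that the populations inside \<open>S\<close> put
  all their mass on \<open>S\<close>; if \<open>E_G(S) = h\<^sup>s\<close> and \<open>S' = S - P\<^sup>s \<noteq> {}\<close>, the populations inside \<open>S\<close>
  meeting \<open>S'\<close> leave \<open>P\<^sup>s\<close>, so their whole mass lies on \<open>S'\<close>, where costs are below \<open>h\<^sup>s\<close>,
  contradicting \<open>S' \<notin> M_G(S)\<close>. For (d), merging populations with the same trace outside \<open>P\<^sup>s\<close>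
  changes no load outside \<open>P\<^sup>s\<close>.\<close>

lemma finite_nonempty_subsets: "finite N \<Longrightarrow> finite (nonempty_subsets N)"
  unfolding nonempty_subsets_def by (rule finite_subset[of _ "Pow N"]) auto

lemma nonempty_subsets_mono: "S \<subseteq> N \<Longrightarrow> nonempty_subsets S \<subseteq> nonempty_subsets N"
  unfolding nonempty_subsets_def by auto

lemma equalizes_sum_less:
  assumes fin: "finite S" and ne: "S \<noteq> {}" and mono: "\<And>k. k \<in> S \<Longrightarrow> mono_on {0..} (f k)"
    and eq: "equalizes S f m c"
    and nonneg: "\<And>k. k \<in> S \<Longrightarrow> 0 \<le> x k" and below: "\<And>k. k \<in> S \<Longrightarrow> f k (x k) < c"
  shows "sum x S < m"
proof -
  obtain y where y: "\<forall>k\<in>S. 0 \<le> y k" "sum y S = m" "\<forall>k\<in>S. f k (y k) = c"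
    using eq unfolding equalizes_def by blast
  have "x k < y k" if k: "k \<in> S" for k
  proof (rule ccontr)
    assume "\<not> x k < y k"
    then have "f k (y k) \<le> f k (x k)"
      using mono[OF k] y(1) nonneg[OF k] k by (auto simp: mono_on_def)
    then show False using y(3) below[OF k] k by auto
  qed
  then have "sum x S < sum y S" using fin ne by (intro sum_strict_mono) auto
  then show ?thesis using y(2) by simp
qed

lemma equalizes_unique:
  assumes fin: "finite S" and ne: "S \<noteq> {}" and mono: "\<And>k. k \<in> S \<Longrightarrow> mono_on {0..} (f k)"
    and "equalizes S f m c" and "equalizes S f m c'"
  shows "c = c'"
proof -
  have False if a: "equalizes S f m a" and b: "equalizes S f m b" and "a < b" for a b
  proof -
    obtain x where x: "\<forall>k\<in>S. 0 \<le> x k" "sum x S = m" "\<forall>k\<in>S. f k (x k) = a"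
      using a unfolding equalizes_def by blast
    have "sum x S < m" using equalizes_sum_less[OF fin ne mono b, of x] x \<open>a < b\<close> by auto
    then show False using x(2) by simp
  qed
  then show ?thesis using assms(4,5) by (metis linorder_neqE)
qed

lemma eqz_eq_SomeI:
  assumes "finite S" and "S \<noteq> {}" and "\<And>k. k \<in> S \<Longrightarrow> mono_on {0..} (f k)"
    and eq: "equalizes S f m c"
  shows "eqz S f m = Some c"
proof -
  have "equalizes S f m (SOME c. equalizes S f m c)" using eq by (rule someI)
  then have "(SOME c. equalizes S f m c) = c" using equalizes_unique[OF assms(1-3) _ eq] by blast
  then show ?thesis using eq unfolding eqz_def by auto
qed

lemma eqz_eq_SomeD: "eqz S f m = Some c \<Longrightarrow> equalizes S f m c"
  unfolding eqz_def by (auto split: if_splits intro: someI_ex)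

definition reduce_profile ::
    "nat set \<Rightarrow> nat set \<Rightarrow> (nat set \<Rightarrow> nat \<Rightarrow> real) \<Rightarrow> nat set \<Rightarrow> nat \<Rightarrow> real" where
  "reduce_profile N P s R' j = (\<Sum>R\<in>{R\<in>nonempty_subsets N. R - P = R'}. s R j)"

locale nash_equilibrium =
  fixes N :: "nat set" and f :: "nat \<Rightarrow> real \<Rightarrow> real" and mu :: "nat set \<Rightarrow> real"
    and s :: "nat set \<Rightarrow> nat \<Rightarrow> real"
  assumes finite_resources: "finite N"
    and nash: "is_nash N f mu s"
begin

lemma finite_populations: "finite (nonempty_subsets N)"
  using finite_nonempty_subsets[OF finite_resources] .

lemma consumption_nonneg: "R \<in> nonempty_subsets N \<Longrightarrow> k \<in> N \<Longrightarrow> 0 \<le> s R k"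
  using nash unfolding is_nash_def is_profile_def by blast

lemma consumption_outside: "R \<in> nonempty_subsets N \<Longrightarrow> k \<in> N \<Longrightarrow> k \<notin> R \<Longrightarrow> s R k = 0"
  using nash unfolding is_nash_def is_profile_def by blast

lemma consumption_sum: "R \<in> nonempty_subsets N \<Longrightarrow> sum (s R) N = mu R"
  using nash unfolding is_nash_def is_profile_def by blast

lemma nash_cost_le:
  "R \<in> nonempty_subsets N \<Longrightarrow> k \<in> N \<Longrightarrow> j \<in> R \<Longrightarrow> 0 < s R k \<Longrightarrow> cost N f s k \<le> cost N f s j"
  using nash unfolding is_nash_def by blast

lemma load_nonneg: "k \<in> N \<Longrightarrow> 0 \<le> load N s k"
  unfolding load_def by (auto intro: sum_nonneg consumption_nonneg)

lemma sum_load: "sum (load N s) T = (\<Sum>R\<in>nonempty_subsets N. sum (s R) T)"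
  unfolding load_def by (rule sum.swap)

lemma mass_le_sum_load:
  assumes T: "T \<subseteq> N" and F: "F \<subseteq> nonempty_subsets N"
    and zero: "\<And>R k. R \<in> F \<Longrightarrow> k \<in> N - T \<Longrightarrow> s R k = 0"
  shows "sum mu F \<le> sum (load N s) T"
proof -
  have "sum mu F = (\<Sum>R\<in>F. sum (s R) T)"
  proof (rule sum.cong[OF refl])
    fix R assume R: "R \<in> F"
    have "sum (s R) N = sum (s R) T"
      using finite_resources T zero[OF R] by (intro sum.mono_neutral_right) auto
    then show "mu R = sum (s R) T" using consumption_sum R F by auto
  qed
  also have "\<dots> \<le> (\<Sum>R\<in>nonempty_subsets N. sum (s R) T)"
    using finite_populations F T by (intro sum_mono2) (auto intro!: sum_nonneg consumption_nonneg)
  finally show ?thesis by (simp add: sum_load)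
qed

lemma sum_load_le_mass:
  assumes T: "T \<subseteq> N" and F: "F \<subseteq> nonempty_subsets N"
    and zero: "\<And>R k. R \<in> nonempty_subsets N - F \<Longrightarrow> k \<in> T \<Longrightarrow> s R k = 0"
  shows "sum (load N s) T \<le> sum mu F"
proof -
  have "sum (load N s) T = (\<Sum>R\<in>F. sum (s R) T)"
    unfolding sum_load using finite_populations F zero by (intro sum.mono_neutral_right) auto
  also have "\<dots> \<le> sum mu F"
  proof (rule sum_mono)
    fix R assume "R \<in> F"
    then have R: "R \<in> nonempty_subsets N" using F by auto
    have "sum (s R) T \<le> sum (s R) N"
      using finite_resources T by (intro sum_mono2) (auto intro: consumption_nonneg[OF R])
    then show "sum (s R) T \<le> mu R" using consumption_sum[OF R] by simp
  qed
  finally show ?thesis .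
qed

lemma mass_inside_le_sum_load:
  assumes S: "S \<subseteq> N"
  shows "sum mu (nonempty_subsets S) \<le> sum (load N s) S"
proof (rule mass_le_sum_load[OF S nonempty_subsets_mono[OF S]])
  fix R k assume "R \<in> nonempty_subsets S" and "k \<in> N - S"
  then show "s R k = 0" using S by (intro consumption_outside) (auto simp: nonempty_subsets_def)
qed

context
  fixes P :: "nat set"
  assumes unused: "\<And>R j. R \<in> nonempty_subsets N \<Longrightarrow> \<not> R \<subseteq> P \<Longrightarrow> j \<in> P \<Longrightarrow> s R j = 0"
begin

lemma load_reduce_profile:
  assumes j: "j \<in> N - P"
  shows "load (N - P) (reduce_profile N P s) j = load N s j"
proof -
  let ?leaving = "{R \<in> nonempty_subsets N. R - P \<noteq> {}}"
  have "load (N - P) (reduce_profile N P s) j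
      = (\<Sum>R'\<in>nonempty_subsets (N - P). \<Sum>R\<in>{R \<in> ?leaving. R - P = R'}. s R j)"
    unfolding load_def reduce_profile_def
    by (rule sum.cong[OF refl], rule sum.cong) (auto simp: nonempty_subsets_def)
  also have "\<dots> = (\<Sum>R\<in>?leaving. s R j)"
    using finite_populations finite_resources
    by (intro sum.group) (auto simp: nonempty_subsets_def finite_nonempty_subsets)
  also have "\<dots> = load N s j"
    unfolding load_def using finite_populations j
    by (intro sum.mono_neutral_left) (auto intro: consumption_outside)
  finally show ?thesis .
qed

lemma cost_reduce_profile: "j \<in> N - P \<Longrightarrow> cost (N - P) f (reduce_profile N P s) j = cost N f s j"
  unfolding cost_def by (simp add: load_reduce_profile)

lemma is_profile_reduce_profile:
  "is_profile (N - P) (remove_mu N mu P) (reduce_profile N P s)"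
  unfolding is_profile_def
proof (intro ballI conjI)
  fix R' assume R': "R' \<in> nonempty_subsets (N - P)"
  let ?merged = "{R \<in> nonempty_subsets N. R - P = R'}"
  show "0 \<le> reduce_profile N P s R' j" if "j \<in> N - P" for j
    using that by (auto simp: reduce_profile_def intro!: sum_nonneg consumption_nonneg)
  show "reduce_profile N P s R' j = 0" if "j \<in> N - P - R'" for j
    using that by (auto simp: reduce_profile_def intro!: sum.neutral consumption_outside)
  have "sum (reduce_profile N P s R') (N - P) = (\<Sum>R\<in>?merged. sum (s R) (N - P))"
    unfolding reduce_profile_def by (rule sum.swap)
  also have "\<dots> = sum mu ?merged"
  proof (rule sum.cong[OF refl])
    fix R assume R: "R \<in> ?merged"
    then have RN: "R \<in> nonempty_subsets N" and leaves: "\<not> R \<subseteq> P"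
      using R' by (auto simp: nonempty_subsets_def)
    have "sum (s R) N = sum (s R) (N - P)"
      using finite_resources by (intro sum.mono_neutral_right) (auto intro: unused[OF RN leaves])
    then show "sum (s R) (N - P) = mu R" using consumption_sum[OF RN] by simp
  qed
  finally show "sum (reduce_profile N P s R') (N - P) = remove_mu N mu P R'"
    unfolding remove_mu_def .
qed

lemma is_nash_reduce_profile: "is_nash (N - P) f (remove_mu N mu P) (reduce_profile N P s)"
  unfolding is_nash_def
proof (intro conjI is_profile_reduce_profile ballI impI)
  fix R' k j
  assume R': "R' \<in> nonempty_subsets (N - P)" and k: "k \<in> N - P" and j: "j \<in> R'"
    and pos: "0 < reduce_profile N P s R' k"
  have "\<exists>R\<in>{R \<in> nonempty_subsets N. R - P = R'}. 0 < s R k"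
    using pos unfolding reduce_profile_def by (meson not_less sum_nonpos)
  then obtain R where R: "R \<in> nonempty_subsets N" "R - P = R'" and "0 < s R k" by blast
  then have "cost N f s k \<le> cost N f s j" using nash_cost_le k j by auto
  moreover have "j \<in> N - P" using R' j by (auto simp: nonempty_subsets_def)
  ultimately show "cost (N - P) f (reduce_profile N P s) k \<le> cost (N - P) f (reduce_profile N P s) j"
    using k by (simp add: cost_reduce_profile)
qed

end

end

locale monotone_nash_equilibrium = nash_equilibrium +
  assumes mono_cost: "\<And>j. j \<in> N \<Longrightarrow> mono_on {0..} (f j)"
    and resources_nonempty: "N \<noteq> {}"
begin

definition h_s :: real where "h_s = Max (cost N f s ` N)"

abbreviation P_s :: "nat set" where "P_s \<equiv> argmax_cost N f s"

lemma cost_le_h_s: "j \<in> N \<Longrightarrow> cost N f s j \<le> h_s"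
  unfolding h_s_def using finite_resources by auto

lemma h_s_attained: "h_s \<in> cost N f s ` N"
  unfolding h_s_def using finite_resources resources_nonempty by (intro Max_in) auto

lemma P_s_eq: "P_s = {j \<in> N. cost N f s j = h_s}"
  using h_s_attained cost_le_h_s unfolding argmax_cost_def by (auto intro: antisym)

lemma P_s_subset: "P_s \<subseteq> N"
  unfolding argmax_cost_def by auto

lemma P_s_nonempty: "P_s \<noteq> {}"
  using h_s_attained P_s_eq by auto

lemma cost_less_h_s: "j \<in> N - P_s \<Longrightarrow> cost N f s j < h_s"
  using P_s_eq cost_le_h_s by force

lemma sum_load_less_equalizing_mass:
  assumes S: "S \<subseteq> N" "S \<noteq> {}" and eq: "equalizes S f m c"
    and below: "\<And>k. k \<in> S \<Longrightarrow> cost N f s k < c"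
  shows "sum (load N s) S < m"
proof (rule equalizes_sum_less[OF finite_subset[OF S(1) finite_resources] S(2) _ eq])
  show "mono_on {0..} (f k)" "0 \<le> load N s k" "f k (load N s k) < c" if "k \<in> S" for k
    using that S mono_cost load_nonneg below[OF that] by (auto simp: cost_def)
qed

lemma consumption_on_P_s:
  assumes R: "R \<in> nonempty_subsets N" and leaves: "\<not> R \<subseteq> P_s" and j: "j \<in> P_s"
  shows "s R j = 0"
proof (rule ccontr)
  assume "s R j \<noteq> 0"
  then have pos: "0 < s R j" using consumption_nonneg[OF R] j P_s_subset by force
  obtain i where i: "i \<in> R" "i \<notin> P_s" using leaves by blast
  then have "i \<in> N" using R by (auto simp: nonempty_subsets_def)
  then have "cost N f s i < cost N f s j" using cost_less_h_s i(2) j P_s_eq by auto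
  moreover have "cost N f s j \<le> cost N f s i" using nash_cost_le[OF R _ i(1) pos] j P_s_subset by auto
  ultimately show False by simp
qed

lemma equalizes_load_P_s: "S \<subseteq> P_s \<Longrightarrow> equalizes S f (sum (load N s) S) h_s"
  unfolding equalizes_def using load_nonneg P_s_subset P_s_eq by (intro exI[of _ "load N s"]) (auto simp: cost_def)

lemma E_G_P_s: "E_G f mu P_s = Some h_s"
proof -
  have "sum (load N s) P_s \<le> sum mu (nonempty_subsets P_s)"
    by (rule sum_load_le_mass[OF P_s_subset nonempty_subsets_mono[OF P_s_subset]])
      (auto simp: nonempty_subsets_def intro: consumption_on_P_s)
  moreover have "sum mu (nonempty_subsets P_s) \<le> sum (load N s) P_s"
    by (rule mass_inside_le_sum_load[OF P_s_subset])
  ultimately have "equalizes P_s f (sum mu (nonempty_subsets P_s)) h_s"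
    using equalizes_load_P_s[OF order_refl] by simp
  then show ?thesis
    unfolding E_G_def using finite_resources P_s_subset P_s_nonempty mono_cost
    by (intro eqz_eq_SomeI) (auto intro: finite_subset[OF _ finite_resources])
qed

lemma M_G_P_s: "M_G f mu P_s = {}"
proof -
  have "S' \<notin> M_G f mu P_s" if S': "S' \<in> nonempty_subsets P_s" for S'
  proof -
    let ?meeting = "{R. R \<subseteq> P_s \<and> R \<inter> S' \<noteq> {}}"
    have S'P: "S' \<subseteq> P_s" "S' \<noteq> {}" using S' by (auto simp: nonempty_subsets_def)
    then have S'N: "S' \<subseteq> N" using P_s_subset by blast
    have "sum (load N s) S' \<le> sum mu ?meeting"
    proof (rule sum_load_le_mass)
      show "S' \<subseteq> N" "?meeting \<subseteq> nonempty_subsets N"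
        using S'P P_s_subset by (auto simp: nonempty_subsets_def)
      fix R k assume R: "R \<in> nonempty_subsets N - ?meeting" and k: "k \<in> S'"
      show "s R k = 0"
      proof (cases "R \<subseteq> P_s")
        case True
        then show ?thesis using R k S'P P_s_subset by (auto intro!: consumption_outside)
      next
        case False
        then show ?thesis using R k S'P by (auto intro: consumption_on_P_s)
      qed
    qed
    moreover have "eqz S' f (sum (load N s) S') = E_G f mu P_s"
      unfolding E_G_P_s using S'P S'N mono_cost
      by (intro eqz_eq_SomeI equalizes_load_P_s) (auto intro: finite_subset[OF _ finite_resources])
    moreover have "0 \<le> sum (load N s) S'"
      using S'P P_s_subset by (auto intro!: sum_nonneg load_nonneg)
    ultimately show ?thesis unfolding M_G_def by auto
  qed
  then show ?thesis by (auto simp: M_G_def)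
qed

lemma P_s_in_D_G: "P_s \<in> D_G N f mu"
  unfolding D_G_def using P_s_subset P_s_nonempty E_G_P_s M_G_P_s
  by (auto simp: nonempty_subsets_def)

lemma E_G_le_h_s:
  assumes S: "S \<in> nonempty_subsets N" and E: "E_G f mu S = Some c"
  shows "c \<le> h_s"
proof (rule ccontr)
  assume "\<not> c \<le> h_s"
  have SN: "S \<subseteq> N" "S \<noteq> {}" using S by (auto simp: nonempty_subsets_def)
  have "equalizes S f (sum mu (nonempty_subsets S)) c" using E eqz_eq_SomeD by (simp add: E_G_def)
  moreover have "cost N f s k < c" if "k \<in> S" for k
    using cost_le_h_s[of k] that SN \<open>\<not> c \<le> h_s\<close> by auto
  ultimately have "sum (load N s) S < sum mu (nonempty_subsets S)"
    using SN by (intro sum_load_less_equalizing_mass)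
  moreover have "sum mu (nonempty_subsets S) \<le> sum (load N s) S"
    by (rule mass_inside_le_sum_load[OF SN(1)])
  ultimately show False by simp
qed

lemma h_G_eq_h_s: "h_G N f mu = h_s"
proof -
  have "finite (D_G N f mu)" using finite_populations unfolding D_G_def by auto
  moreover have "c \<le> h_s" if "c \<in> (\<lambda>S. the (E_G f mu S)) ` D_G N f mu" for c
    using that E_G_le_h_s by (auto simp: D_G_def)
  ultimately show ?thesis
    unfolding h_G_def using P_s_in_D_G E_G_P_s by (intro Max_eqI image_eqI[where x = P_s]) auto
qed

lemma D_G_top_subset_P_s:
  assumes S: "S \<in> D_G N f mu" and top: "the (E_G f mu S) = h_s"
  shows "S \<subseteq> P_s"
proof (rule ccontr)
  assume "\<not> S \<subseteq> P_s"
  define S' where "S' = S - P_s"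
  let ?meeting = "{R. R \<subseteq> S \<and> R \<inter> S' \<noteq> {}}"
  have SN: "S \<subseteq> N" and ES: "E_G f mu S = Some h_s" and MS: "M_G f mu S = {}"
    using S top by (auto simp: D_G_def nonempty_subsets_def)
  have S'N: "S' \<subseteq> N - P_s" "S' \<noteq> {}" using SN \<open>\<not> S \<subseteq> P_s\<close> by (auto simp: S'_def)
  have "S' \<in> nonempty_subsets S" using S'N by (auto simp: S'_def nonempty_subsets_def)
  then obtain m where m: "m \<le> sum mu ?meeting" "eqz S' f m = Some h_s"
    using MS ES unfolding M_G_def by auto
  have "sum (load N s) S' < m"
    using S'N eqz_eq_SomeD[OF m(2)] cost_less_h_s by (intro sum_load_less_equalizing_mass) auto
  moreover have "sum mu ?meeting \<le> sum (load N s) S'"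
  proof (rule mass_le_sum_load)
    show "S' \<subseteq> N" "?meeting \<subseteq> nonempty_subsets N" using S'N SN by (auto simp: nonempty_subsets_def)
    fix R k assume R: "R \<in> ?meeting" and k: "k \<in> N - S'"
    then have RN: "R \<in> nonempty_subsets N" using SN by (auto simp: nonempty_subsets_def)
    show "s R k = 0"
    proof (cases "k \<in> R")
      case True
      then have "k \<in> P_s" "\<not> R \<subseteq> P_s" using R k by (auto simp: S'_def)
      then show ?thesis using consumption_on_P_s[OF RN] by auto
    qed (use RN k consumption_outside in auto)
  qed
  ultimately show False using m(1) by simp
qed

lemma P_G_eq_P_s: "P_G N f mu = P_s"
  unfolding P_G_def h_G_eq_h_s using D_G_top_subset_P_s P_s_in_D_G E_G_P_s by auto

end

theorem mainTheorem14:
  fixes n :: nat and f :: "nat \<Rightarrow> real \<Rightarrow> real" and mu :: "nat set \<Rightarrow> real"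
    and s :: "nat set \<Rightarrow> nat \<Rightarrow> real"
  assumes game: "is_game {1..n} f mu"
    and nash: "is_nash {1..n} f mu s"
  defines "Ps \<equiv> argmax_cost {1..n} f s"
  shows "Ps = P_G {1..n} f mu
    \<and> (\<forall>j\<in>Ps. cost {1..n} f s j = h_G {1..n} f mu)
    \<and> (\<forall>R\<in>nonempty_subsets {1..n}. \<not> R \<subseteq> Ps \<longrightarrow> (\<forall>j\<in>Ps. s R j = 0))
    \<and> (Ps \<noteq> {1..n} \<longrightarrow>
         (let s' = (\<lambda>R' j. \<Sum>R\<in>{R\<in>nonempty_subsets {1..n}. R - Ps = R'}. s R j)
          in is_nash ({1..n} - Ps) f (remove_mu {1..n} mu Ps) s'
             \<and> (\<forall>j\<in>{1..n} - Ps. cost ({1..n} - Ps) f s' j = cost {1..n} f s j)))"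
proof (cases "n = 0")
  case True
  then show ?thesis
    by (simp add: Ps_def argmax_cost_def P_G_def D_G_def nonempty_subsets_def)
next
  case False
  interpret monotone_nash_equilibrium "{1..n}" f mu s
    using game nash False unfolding is_game_def by unfold_locales auto
  note reduction = is_nash_reduce_profile[OF consumption_on_P_s]
    cost_reduce_profile[OF consumption_on_P_s]
  have "\<forall>j\<in>Ps. cost {1..n} f s j = h_G {1..n} f mu"
    unfolding Ps_def h_G_eq_h_s P_s_eq by simp
  moreover have "\<forall>R\<in>nonempty_subsets {1..n}. \<not> R \<subseteq> Ps \<longrightarrow> (\<forall>j\<in>Ps. s R j = 0)"
    unfolding Ps_def using consumption_on_P_s by blast
  ultimately show ?thesis
    using P_G_eq_P_s reduction unfolding Ps_def Let_def reduce_profile_def[abs_def] by simp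
qed

end
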